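(* Let $(M,\mathcal{C})$ be an $n$-dimensional complex Cartan space. If $(M,\mathcal{C})$ is strongly Berwald–Cartan, then it is a Kähler–Cartan space.
   Context: Let $M$ be an $n$-dimensional complex manifold; on $T'^{*}M$ use local coordinates $(z^k,\zeta_k)$. A complex Cartan space $(M,\mathcal{C})$ is given by a continuous $\mathcal{C}:T'^{*}M\to[0,\infty)$ with $H:=\mathcal{C}^2$ smooth off the zero section, $\mathcal{C}(z,\zeta)=0$ iff $\zeta=0$, $\mathcal{C}(z,\lambda\zeta)=|\lambda|\mathcal{C}(z,\zeta)$ for $\lambda\in\mathbb{C}$, and $h^{\bar j i}:=\frac{\partial^2H}{\partial\zeta_i\partial\bar\zeta_j}$ positive definite; $(h_{j\bar k})$ is its inverse. Summation over repeated indices; $\zeta^j:=h^{\bar mj}\bar\zeta_{m}$; $\dot\partial^k:=\partial/\partial\zeta_k$. Chern–Cartan nonlinear connection: $N_{ji}:=-h_{j\bar k}\frac{\partial h^{\bar kl}}{\partial z^i}\zeta_l$, $\delta^*_k:=\frac{\partial}{\partial z^k}+N_{jk}\dot\partial^j$; Chern–Cartan horizontal coefficients $H^i_{jk}:=h^{\bar m i}\delta^*_k(h_{j\bar m})=\dot\partial^iN_{jk}$, with $H^i_{jk}\zeta_i=N_{jk}$. The space is Kähler–Cartan if $N_{jk}=N_{kj}$ for all $j,k$ (equivalently $(H^i_{jk}-H^i_{kj})\zeta_i=0$); weakly Kähler–Cartan if $(N_{jk}-N_{kj})\zeta^j=0$ for all $k$; Berwald–Cartan if all $H^i_{jk}$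 depend only on $z$; strongly Berwald–Cartan if it is Berwald–Cartan and weakly Kähler–Cartan. *)

theory Defs
  imports "HOL-Analysis.Analysis"
begin

text \<open>Local-coordinate model of a complex Cartan space over one holomorphic chart
  U of M (U an open subset of complex n-space). A point of T'*M over U is a pair
  (z, zeta) with z in U and zeta in complex n-space (fibre coordinates).\<close>

type_synonym 'n cpt = "(complex^'n) \<times> (complex^'n)"

primrec Ck :: "nat \<Rightarrow> 'a::real_normed_vector set \<Rightarrow> ('a \<Rightarrow> 'b::real_normed_vector) \<Rightarrow> bool" where
  "Ck 0 S f = continuous_on S f"
| "Ck (Suc k) S f = (f differentiable_on S \<and>
      (\<forall>v. Ck k S (\<lambda>p. frechet_derivative f (at p) v)))"

definition smooth_on :: "'a::real_normed_vector set \<Rightarrow> ('a \<Rightarrow> 'b::real_normed_vector) \<Rightarrow> bool" where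
  "smooth_on S f \<longleftrightarrow> (\<forall>k. Ck k S f)"

definition rdir :: "('a::real_normed_vector \<Rightarrow> complex) \<Rightarrow> 'a \<Rightarrow> 'a \<Rightarrow> complex" where
  "rdir f p v = frechet_derivative f (at p) v"

definition dz :: "'n::finite \<Rightarrow> ('n cpt \<Rightarrow> complex) \<Rightarrow> 'n cpt \<Rightarrow> complex" where
  "dz k f p = (rdir f p (axis k 1, 0) - \<i> * rdir f p (axis k \<i>, 0)) / 2"

definition dzeta :: "'n::finite \<Rightarrow> ('n cpt \<Rightarrow> complex) \<Rightarrow> 'n cpt \<Rightarrow> complex" where
  "dzeta k f p = (rdir f p (0, axis k 1) - \<i> * rdir f p (0, axis k \<i>)) / 2"

definition dzetabar :: "'n::finite \<Rightarrow> ('n cpt \<Rightarrow> complex) \<Rightarrow> 'n cpt \<Rightarrow> complex" where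
  "dzetabar k f p = (rdir f p (0, axis k 1) + \<i> * rdir f p (0, axis k \<i>)) / 2"

text \<open>hup H p $ j $ i = h^{bar j i} = d^2 H / (d zeta_i d conj(zeta_j))\<close>
definition hup :: "('n::finite cpt \<Rightarrow> real) \<Rightarrow> 'n cpt \<Rightarrow> complex^'n^'n" where
  "hup H p = (\<chi> j i. dzeta i (\<lambda>q. dzetabar j (\<lambda>r. complex_of_real (H r)) q) p)"

text \<open>hdown H p $ j $ k = h_{j bar k}, the inverse matrix: sum_k h_{j bar k} h^{bar k i} = delta_j^i\<close>
definition hdown :: "('n::finite cpt \<Rightarrow> real) \<Rightarrow> 'n cpt \<Rightarrow> complex^'n^'n" where
  "hdown H p = matrix_inv (hup H p)"

definition Nconn :: "('n::finite cpt \<Rightarrow> real) \<Rightarrow> 'n \<Rightarrow> 'n \<Rightarrow> 'n cpt \<Rightarrow> complex" where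
  "Nconn H j i p = - (\<Sum>k\<in>UNIV. \<Sum>l\<in>UNIV.
      hdown H p $ j $ k * dz i (\<lambda>q. hup H q $ k $ l) p * (snd p $ l))"

definition delta_star :: "('n::finite cpt \<Rightarrow> real) \<Rightarrow> 'n \<Rightarrow> ('n cpt \<Rightarrow> complex) \<Rightarrow> 'n cpt \<Rightarrow> complex" where
  "delta_star H k f p = dz k f p + (\<Sum>j\<in>UNIV. Nconn H j k p * dzeta j f p)"

definition HC :: "('n::finite cpt \<Rightarrow> real) \<Rightarrow> 'n \<Rightarrow> 'n \<Rightarrow> 'n \<Rightarrow> 'n cpt \<Rightarrow> complex" where
  "HC H i j k p = (\<Sum>m\<in>UNIV. hup H p $ m $ i * delta_star H k (\<lambda>q. hdown H q $ j $ m) p)"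

definition zeta_up :: "('n::finite cpt \<Rightarrow> real) \<Rightarrow> 'n \<Rightarrow> 'n cpt \<Rightarrow> complex" where
  "zeta_up H j p = (\<Sum>m\<in>UNIV. hup H p $ m $ j * cnj (snd p $ m))"

definition slit :: "(complex^'n) set \<Rightarrow> 'n cpt set" where
  "slit U = U \<times> (UNIV - {0})"

definition complex_cartan :: "(complex^'n::finite) set \<Rightarrow> ('n cpt \<Rightarrow> real) \<Rightarrow> bool" where
  "complex_cartan U C \<longleftrightarrow>
     open U \<and>
     continuous_on (U \<times> UNIV) C \<and>
     (\<forall>z\<in>U. \<forall>\<zeta>. 0 \<le> C (z, \<zeta>)) \<and>
     smooth_on (slit U) (\<lambda>p. (C p)\<^sup>2) \<and>
     (\<forall>z\<in>U. \<forall>\<zeta>. C (z, \<zeta>) = 0 \<longleftrightarrow> \<zeta> = 0) \<and>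
     (\<forall>z\<in>U. \<forall>\<zeta>. \<forall>c::complex. C (z, c *s \<zeta>) = cmod c * C (z, \<zeta>)) \<and>
     (\<forall>p\<in>slit U. \<forall>v::complex^'n. v \<noteq> 0 \<longrightarrow>
        (let q = (\<Sum>i\<in>UNIV. \<Sum>j\<in>UNIV. hup (\<lambda>p. (C p)\<^sup>2) p $ j $ i * v $ i * cnj (v $ j))
         in Im q = 0 \<and> 0 < Re q))"

definition kahler_cartan :: "(complex^'n::finite) set \<Rightarrow> ('n cpt \<Rightarrow> real) \<Rightarrow> bool" where
  "kahler_cartan U C \<longleftrightarrow>
     (\<forall>p\<in>slit U. \<forall>j k. Nconn (\<lambda>p. (C p)\<^sup>2) j k p = Nconn (\<lambda>p. (C p)\<^sup>2) k j p)"

definition weakly_kahler_cartan :: "(complex^'n::finite) set \<Rightarrow> ('n cpt \<Rightarrow> real) \<Rightarrow> bool" where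
  "weakly_kahler_cartan U C \<longleftrightarrow>
     (\<forall>p\<in>slit U. \<forall>k. (\<Sum>j\<in>UNIV. (Nconn (\<lambda>p. (C p)\<^sup>2) j k p - Nconn (\<lambda>p. (C p)\<^sup>2) k j p)
                               * zeta_up (\<lambda>p. (C p)\<^sup>2) j p) = 0)"

definition berwald_cartan :: "(complex^'n::finite) set \<Rightarrow> ('n cpt \<Rightarrow> real) \<Rightarrow> bool" where
  "berwald_cartan U C \<longleftrightarrow>
     (\<forall>i j k. \<exists>G :: complex^'n \<Rightarrow> complex.
        \<forall>z \<zeta>. (z, \<zeta>) \<in> slit U \<longrightarrow> HC (\<lambda>p. (C p)\<^sup>2) i j k (z, \<zeta>) = G z)"

definition strongly_berwald_cartan :: "(complex^'n::finite) set \<Rightarrow> ('n cpt \<Rightarrow> real) \<Rightarrow> bool" where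
  "strongly_berwald_cartan U C \<longleftrightarrow> berwald_cartan U C \<and> weakly_kahler_cartan U C"

end

theory Submission
  imports Defs
begin

text \<open>Write \<open>H = C\<^sup>2\<close> and \<open>\<zeta>'\<^sub>m\<close> for \<open>cnj \<zeta>\<^sub>m\<close>. As \<open>H\<close> is homogeneous of bidegree (1,1)
  in \<open>\<zeta>\<close>, differentiating Euler's identity \<open>\<zeta>'\<^sub>m \<partial>H/\<partial>\<zeta>'\<^sub>m = H\<close> gives \<open>\<zeta>\<^sup>j = \<partial>H/\<partial>\<zeta>\<^sub>j\<close>
  and \<open>h\<^sub>j\<^sub>m \<partial>H/\<partial>\<zeta>'\<^sub>m = \<zeta>\<^sub>j\<close>. Applying \<open>\<delta>*\<^sub>k\<close> to the latter, and using that the choice of \<open>N\<close>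
  makes \<open>\<delta>*\<^sub>k(\<partial>H/\<partial>\<zeta>'\<^sub>m) = 0\<close>, yields \<open>N\<^sub>j\<^sub>k = H\<^sup>i\<^sub>j\<^sub>k \<zeta>\<^sub>i\<close>. In a Berwald--Cartan space
  the skew part \<open>A\<^sub>j(\<zeta>) = N\<^sub>j\<^sub>k - N\<^sub>k\<^sub>j\<close> is therefore linear in \<open>\<zeta>\<close>, and the weakly Kaehler
  condition says \<open>A\<^sub>j(\<zeta>) \<zeta>\<^sup>j = 0\<close> on the whole punctured fibre. Differentiating this identity
  in \<open>\<zeta>'\<^sub>l\<close> kills the holomorphic factor \<open>A\<^sub>j\<close> and leaves \<open>h\<^sup>l\<^sup>j A\<^sub>j = 0\<close>, so \<open>A = 0\<close>
  because \<open>h\<close> is positive definite.\<close>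

section \<open>Directional derivatives\<close>

lemma rdir_eqI: "(f has_derivative f') (at p) \<Longrightarrow> rdir f p v = f' v"
  unfolding rdir_def by (metis frechet_derivative_at)

lemma has_derivative_rdir: "f differentiable at p \<Longrightarrow> (f has_derivative rdir f p) (at p)"
  unfolding rdir_def[abs_def] by (simp add: frechet_derivative_works)

lemma rdir_mult:
  "f differentiable at p \<Longrightarrow> g differentiable at p \<Longrightarrow>
   rdir (\<lambda>q. f q * g q) p v = f p * rdir g p v + rdir f p v * g p"
  by (rule rdir_eqI) (intro has_derivative_mult has_derivative_rdir)

lemma rdir_const: "rdir (\<lambda>q. c) p v = 0"
  by (rule rdir_eqI) (rule has_derivative_const)

lemma rdir_sum:
  "finite A \<Longrightarrow> (\<And>i. i \<in> A \<Longrightarrow> f i differentiable at p) \<Longrightarrow>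
   rdir (\<lambda>q. \<Sum>i\<in>A. f i q) p v = (\<Sum>i\<in>A. rdir (f i) p v)"
  by (rule rdir_eqI) (simp add: has_derivative_sum has_derivative_rdir)

lemma rdir_cnj: "f differentiable at p \<Longrightarrow> rdir (\<lambda>q. cnj (f q)) p v = cnj (rdir f p v)"
  by (rule rdir_eqI) (intro has_derivative_cnj has_derivative_rdir)

lemma differentiable_cnj: "f differentiable at x within A \<Longrightarrow> (\<lambda>q. cnj (f q)) differentiable at x within A"
  by (simp add: differentiable_cnj_iff)

lemma cnj_rdir_of_real:
  "f differentiable at p \<Longrightarrow> cnj (rdir (\<lambda>q. complex_of_real (f q)) p v) = rdir (\<lambda>q. complex_of_real (f q)) p v"
proof -
  assume "f differentiable at p"
  then have "rdir (\<lambda>q. complex_of_real (f q)) p v = of_real (frechet_derivative f (at p) v)"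
    using rdir_eqI[OF has_derivative_of_real] frechet_derivative_works by blast
  then show ?thesis by simp
qed

lemma bounded_linear_snd_nth: "bounded_linear (\<lambda>q::'n::finite cpt. snd q $ m)"
  by (intro bounded_linear_compose[OF bounded_linear_vec_nth] bounded_linear_snd)

lemma rdir_snd_nth: "rdir (\<lambda>q::'n::finite cpt. snd q $ m) p v = snd v $ m"
  by (rule rdir_eqI) (rule bounded_linear.has_derivative[OF bounded_linear_snd_nth has_derivative_ident])

lemma differentiable_snd_nth: "(\<lambda>q::'n::finite cpt. snd q $ m) differentiable at p"
  using bounded_linear_snd_nth by (rule bounded_linear_imp_differentiable)

lemma differentiable_linear_snd:
  "(\<lambda>q::'n::finite cpt. \<Sum>i\<in>UNIV. c i * snd q $ i) differentiable at p"
  by (intro differentiable_sum ballI differentiable_mult differentiable_const differentiable_snd_nth) simp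

lemma differentiable_transform_open:
  "open S \<Longrightarrow> p \<in> S \<Longrightarrow> (\<And>q. q \<in> S \<Longrightarrow> f q = g q) \<Longrightarrow> f differentiable at p \<Longrightarrow>
   g differentiable at p"
  unfolding differentiable_def by (metis has_derivative_transform_within_open)

lemma differentiable_prod:
  fixes f :: "'i \<Rightarrow> 'a::real_normed_vector \<Rightarrow> 'b::real_normed_field"
  assumes "\<And>i. i \<in> I \<Longrightarrow> f i differentiable at x"
  shows "(\<lambda>x. \<Prod>i\<in>I. f i x) differentiable at x"
proof -
  obtain D where "\<forall>i\<in>I. (f i has_derivative D i) (at x)"
    using bchoice[of I "\<lambda>i D. (f i has_derivative D) (at x)"] assms unfolding differentiable_def by blast
  then show ?thesis
    unfolding differentiable_def by (blast intro: has_derivative_prod)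
qed

lemma differentiable_det:
  fixes M :: "'a::real_normed_vector \<Rightarrow> complex^'n::finite^'n"
  assumes "\<And>a b. (\<lambda>q. M q $ a $ b) differentiable at p"
  shows "(\<lambda>q. det (M q)) differentiable at p"
  unfolding det_def
  by (intro differentiable_sum ballI differentiable_mult differentiable_prod differentiable_const assms)
    (simp add: finite_permutations)

lemma rdir_transform_open:
  "open S \<Longrightarrow> p \<in> S \<Longrightarrow> (\<And>q. q \<in> S \<Longrightarrow> f q = g q) \<Longrightarrow> f differentiable at p \<Longrightarrow>
   rdir g p v = rdir f p v"
  unfolding rdir_def by (metis frechet_derivative_transform_within_open)

lemma rdir_along_curve:
  fixes f :: "'a::real_normed_vector \<Rightarrow> complex" and \<gamma> :: "real \<Rightarrow> 'a"
  assumes "f differentiable at (\<gamma> 0)"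
    and "(\<gamma> has_derivative (\<lambda>t. t *\<^sub>R v)) (at 0)"
    and "\<forall>\<^sub>F t in nhds 0. f (\<gamma> t) = g t"
    and "(g has_derivative (\<lambda>t. t *\<^sub>R d)) (at 0)"
  shows "rdir f (\<gamma> 0) v = d"
proof -
  have "((\<lambda>t. f (\<gamma> t)) has_derivative (\<lambda>t. rdir f (\<gamma> 0) (t *\<^sub>R v))) (at 0)"
    by (rule has_derivative_compose[OF assms(2) has_derivative_rdir[OF assms(1)]])
  moreover have "\<forall>\<^sub>F t in at 0. f (\<gamma> t) = g t" "f (\<gamma> 0) = g 0"
    using assms(3) eventually_nhds_x_imp_x[OF assms(3)]
    by (auto simp: eventually_at_filter elim: eventually_mono)
  ultimately have "(g has_derivative (\<lambda>t. rdir f (\<gamma> 0) (t *\<^sub>R v))) (at 0)"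
    using has_derivative_transform_eventually[of _ _ 0 UNIV g] by blast
  from has_derivative_unique[OF this assms(4)] show ?thesis
    by (metis scaleR_one)
qed

section \<open>Smoothness\<close>

lemma differentiable_on_open_iff:
  "open S \<Longrightarrow> f differentiable_on S \<longleftrightarrow> (\<forall>p\<in>S. f differentiable at p)"
  unfolding differentiable_on_def by (metis at_within_open)

lemma Ck_cong: "open S \<Longrightarrow> (\<And>q. q \<in> S \<Longrightarrow> f q = g q) \<Longrightarrow> Ck k S f \<Longrightarrow> Ck k S g"
proof (induction k arbitrary: f g)
  case 0
  then show ?case by (metis Ck.simps(1) continuous_on_cong)
next
  case (Suc k)
  have df: "f differentiable at q" if "q \<in> S" for q
    using Suc.prems that by (simp add: differentiable_on_open_iff)
  have "Ck k S (\<lambda>p. frechet_derivative g (at p) v)" for v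
  proof (rule Suc.IH[OF Suc.prems(1)])
    show "frechet_derivative f (at q) v = frechet_derivative g (at q) v" if "q \<in> S" for q
      using frechet_derivative_transform_within_open[OF df[OF that] Suc.prems(1) that Suc.prems(2)] by simp
    show "Ck k S (\<lambda>p. frechet_derivative f (at p) v)"
      using Suc.prems(3) by simp
  qed
  moreover have "g differentiable at q" if "q \<in> S" for q
    using differentiable_transform_open[OF Suc.prems(1) that _ df[OF that]] Suc.prems(2) by blast
  ultimately show ?case using Suc.prems(1) by (simp add: differentiable_on_open_iff)
qed

lemma Ck_add:
  fixes f g :: "'a::real_normed_vector \<Rightarrow> 'b::real_normed_vector"
  assumes "open S"
  shows "Ck k S f \<Longrightarrow> Ck k S g \<Longrightarrow> Ck k S (\<lambda>q. f q + g q)"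
proof (induction k arbitrary: f g)
  case 0
  then show ?case by (simp add: continuous_on_add)
next
  case (Suc k)
  have df: "f differentiable at q" "g differentiable at q" if "q \<in> S" for q
    using Suc.prems that assms by (simp_all add: differentiable_on_open_iff)
  have "frechet_derivative f (at q) v + frechet_derivative g (at q) v
        = frechet_derivative (\<lambda>q. f q + g q) (at q) v" if "q \<in> S" for q v
    using frechet_derivative_at[OF has_derivative_add[OF df[OF that, THEN frechet_derivative_works[THEN iffD1]]]]
    by metis
  moreover have "Ck k S (\<lambda>p. frechet_derivative f (at p) v + frechet_derivative g (at p) v)" for v
    using Suc.IH Suc.prems by simp
  ultimately have "Ck k S (\<lambda>p. frechet_derivative (\<lambda>q. f q + g q) (at p) v)" for v
    by (rule Ck_cong[OF assms])
  then show ?case using df assms by (simp add: differentiable_on_open_iff)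
qed

lemma Ck_bounded_linear:
  fixes f :: "'a::real_normed_vector \<Rightarrow> 'b::real_normed_vector" and L :: "'b \<Rightarrow> 'c::real_normed_vector"
  assumes "open S" "bounded_linear L"
  shows "Ck k S f \<Longrightarrow> Ck k S (\<lambda>q. L (f q))"
proof (induction k arbitrary: f)
  case 0
  then show ?case using assms(2) by (simp add: bounded_linear.continuous_on continuous_on_id')
next
  case (Suc k)
  have df: "f differentiable at q" if "q \<in> S" for q
    using Suc.prems that assms by (simp add: differentiable_on_open_iff)
  have DLf: "((\<lambda>q. L (f q)) has_derivative (\<lambda>v. L (frechet_derivative f (at q) v))) (at q)" if "q \<in> S" for q
    using bounded_linear.has_derivative[OF assms(2) df[OF that, THEN frechet_derivative_works[THEN iffD1]]] .
  then have "L (frechet_derivative f (at q) v) = frechet_derivative (\<lambda>q. L (f q)) (at q) v" if "q \<in> S" for q v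
    using frechet_derivative_at that by metis
  moreover have "Ck k S (\<lambda>p. L (frechet_derivative f (at p) v))" for v
    using Suc.IH Suc.prems by simp
  ultimately have "Ck k S (\<lambda>p. frechet_derivative (\<lambda>q. L (f q)) (at p) v)" for v
    by (rule Ck_cong[OF assms(1)])
  moreover have "(\<lambda>q. L (f q)) differentiable at q" if "q \<in> S" for q
    using DLf[OF that] unfolding differentiable_def by blast
  ultimately show ?case using assms by (simp add: differentiable_on_open_iff)
qed

lemma smooth_on_add: "open S \<Longrightarrow> smooth_on S f \<Longrightarrow> smooth_on S g \<Longrightarrow> smooth_on S (\<lambda>q. f q + g q)"
  unfolding smooth_on_def using Ck_add by blast

lemma smooth_on_bounded_linear:
  "open S \<Longrightarrow> bounded_linear L \<Longrightarrow> smooth_on S f \<Longrightarrow> smooth_on S (\<lambda>q. L (f q))"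
  unfolding smooth_on_def using Ck_bounded_linear by blast

lemma smooth_on_imp_differentiable: "open S \<Longrightarrow> smooth_on S f \<Longrightarrow> p \<in> S \<Longrightarrow> f differentiable at p"
  unfolding smooth_on_def by (metis Ck.simps(2) differentiable_on_open_iff)

lemma smooth_on_rdir: "smooth_on S f \<Longrightarrow> smooth_on S (\<lambda>p. rdir f p v)"
  unfolding smooth_on_def rdir_def by (metis Ck.simps(2))

lemma smooth_on_wirtinger:
  assumes "open S" "smooth_on S f"
  shows "smooth_on S (\<lambda>p. (rdir f p u + c * rdir f p w) / 2)"
proof -
  have "smooth_on S (\<lambda>p. (1/2) * (rdir f p u + c * rdir f p w))"
    using assms by (intro smooth_on_bounded_linear[OF _ bounded_linear_mult_right] smooth_on_add smooth_on_rdir)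
  then show ?thesis by simp
qed

lemma smooth_on_dzeta: "open S \<Longrightarrow> smooth_on S f \<Longrightarrow> smooth_on S (dzeta k f)"
  using smooth_on_wirtinger[of S f _ "-\<i>"] unfolding dzeta_def[abs_def] by simp

lemma smooth_on_dzetabar: "open S \<Longrightarrow> smooth_on S f \<Longrightarrow> smooth_on S (dzetabar k f)"
  using smooth_on_wirtinger[of S f _ "\<i>"] unfolding dzetabar_def[abs_def] by simp

section \<open>Wirtinger derivatives\<close>

lemma dzeta_mult:
  "f differentiable at p \<Longrightarrow> g differentiable at p \<Longrightarrow>
   dzeta k (\<lambda>q. f q * g q) p = f p * dzeta k g p + dzeta k f p * g p"
  unfolding dzeta_def by (simp add: rdir_mult field_simps)

lemma dzetabar_mult:
  "f differentiable at p \<Longrightarrow> g differentiable at p \<Longrightarrow>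
   dzetabar k (\<lambda>q. f q * g q) p = f p * dzetabar k g p + dzetabar k f p * g p"
  unfolding dzetabar_def by (simp add: rdir_mult field_simps)

lemma dz_mult:
  "f differentiable at p \<Longrightarrow> g differentiable at p \<Longrightarrow>
   dz k (\<lambda>q. f q * g q) p = f p * dz k g p + dz k f p * g p"
  unfolding dz_def by (simp add: rdir_mult field_simps)

lemma dzeta_sum:
  "finite A \<Longrightarrow> (\<And>i. i \<in> A \<Longrightarrow> f i differentiable at p) \<Longrightarrow>
   dzeta k (\<lambda>q. \<Sum>i\<in>A. f i q) p = (\<Sum>i\<in>A. dzeta k (f i) p)"
  unfolding dzeta_def by (simp add: rdir_sum sum_subtractf sum_distrib_left flip: sum_divide_distrib)

lemma dzetabar_sum:
  "finite A \<Longrightarrow> (\<And>i. i \<in> A \<Longrightarrow> f i differentiable at p) \<Longrightarrow>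
   dzetabar k (\<lambda>q. \<Sum>i\<in>A. f i q) p = (\<Sum>i\<in>A. dzetabar k (f i) p)"
  unfolding dzetabar_def by (simp add: rdir_sum sum.distrib sum_distrib_left flip: sum_divide_distrib)

lemma dz_sum:
  "finite A \<Longrightarrow> (\<And>i. i \<in> A \<Longrightarrow> f i differentiable at p) \<Longrightarrow>
   dz k (\<lambda>q. \<Sum>i\<in>A. f i q) p = (\<Sum>i\<in>A. dz k (f i) p)"
  unfolding dz_def by (simp add: rdir_sum sum_subtractf sum_distrib_left flip: sum_divide_distrib)

lemma dzeta_transform_open:
  assumes "open S" "p \<in> S" "\<And>q. q \<in> S \<Longrightarrow> f q = g q" "f differentiable at p"
  shows "dzeta k g p = dzeta k f p"
  unfolding dzeta_def using rdir_transform_open[OF assms] by simp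

lemma dzetabar_transform_open:
  assumes "open S" "p \<in> S" "\<And>q. q \<in> S \<Longrightarrow> f q = g q" "f differentiable at p"
  shows "dzetabar k g p = dzetabar k f p"
  unfolding dzetabar_def using rdir_transform_open[OF assms] by simp

lemma dz_transform_open:
  assumes "open S" "p \<in> S" "\<And>q. q \<in> S \<Longrightarrow> f q = g q" "f differentiable at p"
  shows "dz k g p = dz k f p"
  unfolding dz_def using rdir_transform_open[OF assms] by simp

lemma dzeta_snd_nth: "dzeta k (\<lambda>q::'n::finite cpt. snd q $ m) p = (if k = m then 1 else 0)"
  unfolding dzeta_def rdir_snd_nth by (simp add: axis_def)

lemma dzetabar_snd_nth: "dzetabar k (\<lambda>q::'n::finite cpt. snd q $ m) p = 0"
  unfolding dzetabar_def rdir_snd_nth by (simp add: axis_def)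

lemma dz_snd_nth: "dz k (\<lambda>q::'n::finite cpt. snd q $ m) p = 0"
  unfolding dz_def rdir_snd_nth by (simp add: axis_def)

lemma dzeta_cnj_snd_nth: "dzeta k (\<lambda>q::'n::finite cpt. cnj (snd q $ m)) p = 0"
  unfolding dzeta_def rdir_cnj[OF differentiable_snd_nth] rdir_snd_nth by (simp add: axis_def)

lemma dzetabar_cnj: "f differentiable at p \<Longrightarrow> dzetabar k (\<lambda>q. cnj (f q)) p = cnj (dzeta k f p)"
  unfolding dzetabar_def dzeta_def by (simp add: rdir_cnj)

lemma dzeta_of_real_eq_cnj_dzetabar:
  assumes "f differentiable at p"
  shows "dzeta k (\<lambda>q. complex_of_real (f q)) p = cnj (dzetabar k (\<lambda>q. complex_of_real (f q)) p)"
  unfolding dzeta_def dzetabar_def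
  by (simp add: cnj_rdir_of_real[OF assms] algebra_simps)

lemma dzetabar_const: "dzetabar k (\<lambda>q. c) p = 0"
  unfolding dzetabar_def by (simp add: rdir_const)

lemma dzetabar_linear_snd: "dzetabar l (\<lambda>q::'n::finite cpt. \<Sum>i\<in>UNIV. c i * snd q $ i) p = 0"
proof -
  have "dzetabar l (\<lambda>q::'n cpt. \<Sum>i\<in>UNIV. c i * snd q $ i) p = (\<Sum>i\<in>UNIV. dzetabar l (\<lambda>q. c i * snd q $ i) p)"
    by (rule dzetabar_sum) (simp_all add: differentiable_snd_nth)
  also have "\<dots> = 0"
    by (simp add: dzetabar_mult[OF differentiable_const differentiable_snd_nth] dzetabar_snd_nth dzetabar_const)
  finally show ?thesis .
qed

lemma sum_cnj_dzetabar:
  fixes f :: "'n::finite cpt \<Rightarrow> complex"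
  assumes "f differentiable at (z, \<zeta>)"
  shows "(\<Sum>m\<in>UNIV. cnj (\<zeta> $ m) * dzetabar m f (z, \<zeta>))
       = (rdir f (z, \<zeta>) (0, \<zeta>) + \<i> * rdir f (z, \<zeta>) (0, \<i> *s \<zeta>)) / 2"
proof -
  define L where "L w = rdir f (z, \<zeta>) (0, w)" for w
  have "linear L"
    unfolding L_def using has_derivative_bounded_linear[OF has_derivative_rdir[OF assms]]
    by (intro bounded_linear.linear bounded_linear_compose[OF _ bounded_linear_Pair[OF bounded_linear_zero bounded_linear_ident]])
  have L: "L w = (\<Sum>m\<in>UNIV. Re (w $ m) *\<^sub>R L (axis m 1) + Im (w $ m) *\<^sub>R L (axis m \<i>))" for w
  proof -
    have "w = (\<Sum>m\<in>UNIV. Re (w $ m) *\<^sub>R axis m 1 + Im (w $ m) *\<^sub>R axis m \<i>)"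
      by (simp add: vec_eq_iff axis_def if_distrib[of "\<lambda>x. _ *\<^sub>R x"] sum.distrib complex_eq_iff cong: if_cong)
    then have "L w = L (\<Sum>m\<in>UNIV. Re (w $ m) *\<^sub>R axis m 1 + Im (w $ m) *\<^sub>R axis m \<i>)"
      by (rule arg_cong)
    also have "\<dots> = (\<Sum>m\<in>UNIV. Re (w $ m) *\<^sub>R L (axis m 1) + Im (w $ m) *\<^sub>R L (axis m \<i>))"
      by (simp add: linear_sum[OF \<open>linear L\<close>] linear_add[OF \<open>linear L\<close>] linear_scale[OF \<open>linear L\<close>])
    finally show ?thesis .
  qed
  have cnj_split: "cnj x * (a + \<i> * b) = (Re x *\<^sub>R a + Im x *\<^sub>R b) + \<i> * ((- Im x) *\<^sub>R a + Re x *\<^sub>R b)" for x a b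
    by (simp add: complex_eq_iff scaleR_conv_of_real algebra_simps)
  have "(\<Sum>m\<in>UNIV. cnj (\<zeta> $ m) * dzetabar m f (z, \<zeta>))
      = (\<Sum>m\<in>UNIV. cnj (\<zeta> $ m) * (L (axis m 1) + \<i> * L (axis m \<i>))) / 2"
    unfolding dzetabar_def L_def by (simp add: sum_divide_distrib)
  also have "\<dots> = (L \<zeta> + \<i> * L (\<i> *s \<zeta>)) / 2"
    unfolding L[of \<zeta>] L[of "\<i> *s \<zeta>"] cnj_split by (simp add: sum.distrib sum_distrib_left)
  finally show ?thesis unfolding L_def .
qed

lemma euler_homogeneous:
  fixes f :: "'n::finite cpt \<Rightarrow> complex"
  assumes "f differentiable at (z, \<zeta>)"
    and homogeneous: "\<And>c. f (z, c *s \<zeta>) = of_real ((cmod c)\<^sup>2) * f (z, \<zeta>)"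
  shows "(\<Sum>m\<in>UNIV. cnj (\<zeta> $ m) * dzetabar m f (z, \<zeta>)) = f (z, \<zeta>)"
proof -
  let ?radial = "\<lambda>t::real. (z, \<zeta>) + t *\<^sub>R (0, \<zeta>)"
  have "rdir f (?radial 0) (0, \<zeta>) = 2 * f (z, \<zeta>)"
  proof (rule rdir_along_curve[where g="\<lambda>t. of_real ((1 + t)\<^sup>2) * f (z, \<zeta>)"])
    have "f (?radial t) = of_real ((1 + t)\<^sup>2) * f (z, \<zeta>)" for t
    proof -
      have "?radial t = (z, complex_of_real (1 + t) *s \<zeta>)"
        by (simp add: vec_eq_iff) (simp add: scaleR_conv_of_real algebra_simps)
      then show ?thesis
        using homogeneous[of "of_real (1 + t)"] by (simp only: norm_of_real power2_abs)
    qed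
    then show "\<forall>\<^sub>F t in nhds 0. f (?radial t) = of_real ((1 + t)\<^sup>2) * f (z, \<zeta>)"
      by simp
    show "((\<lambda>t. of_real ((1 + t)\<^sup>2) * f (z, \<zeta>)) has_derivative (\<lambda>t. t *\<^sub>R (2 * f (z, \<zeta>)))) (at 0)"
      by (auto intro!: derivative_eq_intros simp: scaleR_conv_of_real)
  qed (use assms(1) in \<open>auto intro!: derivative_eq_intros\<close>)
  moreover
  let ?rotation = "\<lambda>t::real. (z, \<zeta>) + (cos t - 1) *\<^sub>R (0, \<zeta>) + sin t *\<^sub>R (0, \<i> *s \<zeta>)"
  have "rdir f (?rotation 0) (0, \<i> *s \<zeta>) = 0"
  proof (rule rdir_along_curve[where g="\<lambda>t. f (z, \<zeta>)"])
    have "f (?rotation t) = f (z, \<zeta>)" for t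
    proof -
      have "?rotation t = (z, cis t *s \<zeta>)"
        by (simp add: vec_eq_iff) (simp add: scaleR_conv_of_real algebra_simps cis.ctr Complex_eq)
      then show ?thesis
        using homogeneous[of "cis t"] by simp
    qed
    then show "\<forall>\<^sub>F t in nhds 0. f (?rotation t) = f (z, \<zeta>)"
      by simp
  qed (use assms(1) in \<open>auto intro!: derivative_eq_intros\<close>)
  ultimately show ?thesis
    by (simp add: sum_cnj_dzetabar[OF assms(1)])
qed

lemma dzetabar_eq_0_if_vanishes_on_fibre:
  fixes f :: "'n::finite cpt \<Rightarrow> complex"
  assumes "f differentiable at (z, \<zeta>)" "\<zeta> \<noteq> 0" "\<And>\<xi>. \<xi> \<noteq> 0 \<Longrightarrow> f (z, \<xi>) = 0"
  shows "dzetabar l f (z, \<zeta>) = 0"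
proof -
  have "rdir f ((z, \<zeta>) + 0 *\<^sub>R (0, w)) (0, w) = 0" for w
  proof (rule rdir_along_curve[where g="\<lambda>t. 0"])
    have "((\<lambda>t::real. \<zeta> + t *\<^sub>R w) \<longlongrightarrow> \<zeta> + 0 *\<^sub>R w) (nhds 0)"
      by (intro tendsto_intros filterlim_ident)
    then have "\<forall>\<^sub>F t in nhds 0. \<zeta> + t *\<^sub>R w \<noteq> 0"
      using assms(2) tendsto_imp_eventually_ne by fastforce
    then show "\<forall>\<^sub>F t in nhds 0. f ((z, \<zeta>) + t *\<^sub>R (0, w)) = 0"
      by eventually_elim (simp add: assms(3))
  qed (use assms(1) in \<open>auto intro!: derivative_eq_intros\<close>)
  then show ?thesis
    unfolding dzetabar_def by simp
qed

section \<open>Hermitian forms and inverse matrices\<close>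

definition quad_form :: "complex^'n^'n \<Rightarrow> complex^'n \<Rightarrow> complex" where
  "quad_form h v = (\<Sum>i\<in>UNIV. \<Sum>j\<in>UNIV. h $ j $ i * v $ i * cnj (v $ j))"

lemma quad_form_axis: "quad_form h (axis a x) = h $ a $ a * x * cnj x"
  unfolding quad_form_def
  by (simp add: axis_def if_distrib[of "\<lambda>t. _ * t"] if_distrib[of "\<lambda>t. t * _"] if_distrib[of cnj] cong: if_cong)

lemma quad_form_axis_add:
  "a \<noteq> b \<Longrightarrow> quad_form h (axis a x + axis b y)
     = h $ a $ a * x * cnj x + h $ a $ b * y * cnj x + h $ b $ a * x * cnj y + h $ b $ b * y * cnj y"
  unfolding quad_form_def
  by (simp add: axis_def distrib_left distrib_right sum.distrib if_distrib[of "\<lambda>t. _ * t"]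
      if_distrib[of "\<lambda>t. t * _"] if_distrib[of cnj] cong: if_cong)

lemma quad_form_eq_sum_mult_vec: "quad_form h v = (\<Sum>j\<in>UNIV. cnj (v $ j) * (h *v v) $ j)"
  unfolding quad_form_def
  by (subst sum.swap) (simp add: matrix_vector_mult_def sum_distrib_left mult_ac)

lemma hermitian_if_quad_form_real:
  assumes real: "\<And>v. v \<noteq> 0 \<Longrightarrow> Im (quad_form h v) = 0"
  shows "h $ a $ b = cnj (h $ b $ a)"
proof (cases "a = b")
  case True
  have "axis a (1::complex) \<noteq> 0" by (simp add: axis_eq_0_iff)
  from real[OF this] show ?thesis
    using True by (simp add: quad_form_axis complex_eq_iff)
next
  case False
  have "axis a (1::complex) \<noteq> 0" "axis b (1::complex) \<noteq> 0" by (simp_all add: axis_eq_0_iff)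
  moreover have "axis a 1 + axis b c \<noteq> 0" if "c \<noteq> 0" for c :: complex
    using False that by (simp add: vec_eq_iff axis_def) (metis one_neq_zero)
  ultimately have "Im (h$a$a) = 0" "Im (h$b$b) = 0"
    "Im (h$a$a + h$a$b + h$b$a + h$b$b) = 0" "Im (h$a$a + h$a$b * \<i> - h$b$a * \<i> + h$b$b) = 0"
    using real[of "axis a 1"] real[of "axis b 1"] real[of "axis a 1 + axis b 1"] real[of "axis a 1 + axis b \<i>"]
    by (simp_all add: quad_form_axis quad_form_axis_add[OF False])
  then show ?thesis by (simp add: complex_eq_iff)
qed

lemma mult_vec_eq_0_if_quad_form_pos:
  assumes "\<And>v. v \<noteq> 0 \<Longrightarrow> 0 < Re (quad_form h v)" and "h *v v = 0"
  shows "v = 0"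
proof (rule ccontr)
  assume "v \<noteq> 0"
  from assms(1)[OF this] show False by (simp add: quad_form_eq_sum_mult_vec assms(2))
qed

lemma invertible_if_quad_form_pos:
  fixes h :: "complex^'n::finite^'n"
  assumes "\<And>v. v \<noteq> 0 \<Longrightarrow> 0 < Re (quad_form h v)"
  shows "invertible h"
  using mult_vec_eq_0_if_quad_form_pos[OF assms]
  by (simp add: invertible_left_inverse matrix_left_invertible_ker)

lemma matrix_mul_matrix_inv:
  fixes h :: "'a::semiring_1^'n^'n"
  assumes "invertible h"
  shows "h ** matrix_inv h = mat 1" "matrix_inv h ** h = mat 1"
  using someI_ex[OF assms[unfolded invertible_def]] unfolding matrix_inv_def by auto

lemma matrix_inv_cramer:
  fixes h :: "complex^'n::finite^'n"
  assumes "invertible h"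
  shows "matrix_inv h $ i $ k = det (\<chi> a c. if c = i then axis k 1 $ a else h $ a $ c) / det h"
proof -
  have "h *v (matrix_inv h *v axis k 1) = axis k 1"
    by (simp add: matrix_vector_mul_assoc matrix_mul_matrix_inv[OF assms])
  then have "matrix_inv h *v axis k 1 = (\<chi> i. det (\<chi> a c. if c = i then axis k 1 $ a else h $ a $ c) / det h)"
    using cramer[of h] assms invertible_det_nz by blast
  moreover have "(matrix_inv h *v axis k 1) $ i = matrix_inv h $ i $ k"
    by (simp add: matrix_vector_mult_def axis_def if_distrib[of "\<lambda>t. _ * t"] cong: if_cong)
  ultimately show ?thesis by simp
qed

section \<open>The horizontal derivative \<open>\<delta>*\<close>\<close>

lemma delta_star_mult:
  "f differentiable at p \<Longrightarrow> g differentiable at p \<Longrightarrow>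
   delta_star H k (\<lambda>q. f q * g q) p = f p * delta_star H k g p + delta_star H k f p * g p"
  unfolding delta_star_def
  by (simp add: dz_mult dzeta_mult algebra_simps sum.distrib sum_distrib_left sum_distrib_right)

lemma delta_star_sum:
  "finite A \<Longrightarrow> (\<And>i. i \<in> A \<Longrightarrow> f i differentiable at p) \<Longrightarrow>
   delta_star H k (\<lambda>q. \<Sum>i\<in>A. f i q) p = (\<Sum>i\<in>A. delta_star H k (f i) p)"
  unfolding delta_star_def
  by (simp add: dz_sum dzeta_sum sum.distrib sum_distrib_left) (rule sum.swap)

lemma delta_star_transform_open:
  assumes "open S" "p \<in> S" "\<And>q. q \<in> S \<Longrightarrow> f q = g q" "f differentiable at p"
  shows "delta_star H k g p = delta_star H k f p"
  unfolding delta_star_def using dz_transform_open[OF assms] dzeta_transform_open[OF assms] by simp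

lemma delta_star_snd_nth: "delta_star H k (\<lambda>q. snd q $ j) p = Nconn H j k p"
  unfolding delta_star_def
  by (simp add: dz_snd_nth dzeta_snd_nth if_distrib[of "\<lambda>t. _ * t"] cong: if_cong)

section \<open>Complex Cartan spaces\<close>

lemma open_slit: "open U \<Longrightarrow> open (slit U)"
  unfolding slit_def by (auto intro!: open_Times open_Diff)

locale cartan_space =
  fixes U :: "(complex^'n::finite) set" and C :: "'n cpt \<Rightarrow> real"
  assumes complex_cartan: "complex_cartan U C"
begin

abbreviation H :: "'n cpt \<Rightarrow> real" where
  "H \<equiv> \<lambda>p. (C p)\<^sup>2"

text \<open>\<open>Hc\<close> is a constant rather than an abbreviation so that the simplifier cannot turn
  \<open>of_real ((C p)\<^sup>2)\<close> into \<open>(of_real (C p))\<^sup>2\<close> inside Wirtinger derivatives.\<close>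

definition Hc :: "'n cpt \<Rightarrow> complex" where
  "Hc p = complex_of_real ((C p)\<^sup>2)"

lemma open_slit_U: "open (slit U)"
  using complex_cartan open_slit unfolding complex_cartan_def by blast

lemma smooth_on_H: "smooth_on (slit U) H"
  using complex_cartan unfolding complex_cartan_def by blast

lemma smooth_on_Hc: "smooth_on (slit U) Hc"
  unfolding Hc_def[abs_def]
  using smooth_on_bounded_linear[OF open_slit_U bounded_linear_of_real smooth_on_H] .

lemma smooth_on_dzetabar_Hc: "smooth_on (slit U) (dzetabar m Hc)"
  using smooth_on_dzetabar[OF open_slit_U smooth_on_Hc] .

lemma hup_eq_dzeta_dzetabar: "hup H q $ a $ b = dzeta b (dzetabar a Hc) q"
  by (simp only: hup_def vec_lambda_beta Hc_def[abs_def])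

lemma differentiable_dzetabar_Hc: "p \<in> slit U \<Longrightarrow> dzetabar m Hc differentiable at p"
  using smooth_on_imp_differentiable[OF open_slit_U smooth_on_dzetabar_Hc] .

lemma differentiable_dzeta_Hc: "p \<in> slit U \<Longrightarrow> dzeta m Hc differentiable at p"
  using smooth_on_imp_differentiable[OF open_slit_U smooth_on_dzeta[OF open_slit_U smooth_on_Hc]] .

lemma differentiable_hup: "p \<in> slit U \<Longrightarrow> (\<lambda>q. hup H q $ a $ b) differentiable at p"
  unfolding hup_eq_dzeta_dzetabar
  using smooth_on_imp_differentiable[OF open_slit_U smooth_on_dzeta[OF open_slit_U smooth_on_dzetabar_Hc]] .

lemma dzeta_Hc_eq_cnj: "p \<in> slit U \<Longrightarrow> dzeta m Hc p = cnj (dzetabar m Hc p)"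
  unfolding Hc_def[abs_def]
  by (rule dzeta_of_real_eq_cnj_dzetabar) (rule smooth_on_imp_differentiable[OF open_slit_U smooth_on_H])

lemma homogeneous_Hc: "z \<in> U \<Longrightarrow> Hc (z, c *s \<zeta>) = of_real ((cmod c)\<^sup>2) * Hc (z, \<zeta>)"
  using complex_cartan unfolding complex_cartan_def Hc_def by (simp add: power_mult_distrib)

lemma quad_form_hup:
  assumes "p \<in> slit U" "v \<noteq> 0"
  shows "Im (quad_form (hup H p) v) = 0" "0 < Re (quad_form (hup H p) v)"
  using complex_cartan assms unfolding complex_cartan_def quad_form_def Let_def by blast+

lemma hup_hermitian: "p \<in> slit U \<Longrightarrow> hup H p $ a $ b = cnj (hup H p $ b $ a)"
  by (rule hermitian_if_quad_form_real) (rule quad_form_hup)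

lemma hup_invertible: "p \<in> slit U \<Longrightarrow> invertible (hup H p)"
  by (rule invertible_if_quad_form_pos) (rule quad_form_hup)

lemma hup_mult_vec_eq_0: "p \<in> slit U \<Longrightarrow> hup H p *v v = 0 \<Longrightarrow> v = 0"
  by (rule mult_vec_eq_0_if_quad_form_pos) (rule quad_form_hup)

lemma hup_mult_hdown:
  "p \<in> slit U \<Longrightarrow> (\<Sum>k\<in>UNIV. hup H p $ a $ k * hdown H p $ k $ b) = (if a = b then 1 else 0)"
  using matrix_mul_matrix_inv(1)[OF hup_invertible, of p] unfolding hdown_def
  by (simp add: vec_eq_iff matrix_matrix_mult_def mat_def)

lemma hdown_mult_hup:
  "p \<in> slit U \<Longrightarrow> (\<Sum>k\<in>UNIV. hdown H p $ a $ k * hup H p $ k $ b) = (if a = b then 1 else 0)"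
  using matrix_mul_matrix_inv(2)[OF hup_invertible, of p] unfolding hdown_def
  by (simp add: vec_eq_iff matrix_matrix_mult_def mat_def)

lemma differentiable_hdown:
  assumes "p \<in> slit U"
  shows "(\<lambda>q. hdown H q $ j $ m) differentiable at p"
proof (rule differentiable_transform_open[OF open_slit_U assms])
  let ?M = "\<lambda>q. (\<chi> a c. if c = j then axis m 1 $ a else hup H q $ a $ c) :: complex^'n^'n"
  have entries: "(\<lambda>q. ?M q $ a $ b) differentiable at p" for a b
    using differentiable_hup[OF assms] by (cases "b = j") simp_all
  have "det (hup H p) \<noteq> 0"
    using hup_invertible[OF assms] invertible_det_nz by blast
  then show "(\<lambda>q. det (?M q) / det (hup H q)) differentiable at p"
    by (intro differentiable_divide differentiable_det entries differentiable_hup[OF assms])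
  show "det (?M q) / det (hup H q) = hdown H q $ j $ m" if "q \<in> slit U" for q
    unfolding hdown_def using matrix_inv_cramer[OF hup_invertible[OF that]] by simp
qed

lemma dzetabar_dzeta_Hc:
  assumes "p \<in> slit U"
  shows "dzetabar l (dzeta j Hc) p = hup H p $ l $ j"
proof -
  have "dzetabar l (dzeta j Hc) p = dzetabar l (\<lambda>q. cnj (dzetabar j Hc q)) p"
    by (rule dzetabar_transform_open[OF open_slit_U assms dzeta_Hc_eq_cnj[symmetric]
          differentiable_cnj[OF differentiable_dzetabar_Hc[OF assms]]])
  also have "\<dots> = cnj (dzeta l (dzetabar j Hc) p)"
    by (rule dzetabar_cnj[OF differentiable_dzetabar_Hc[OF assms]])
  also have "\<dots> = hup H p $ l $ j"
    unfolding hup_eq_dzeta_dzetabar[symmetric] by (rule hup_hermitian[OF assms, symmetric])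
  finally show ?thesis .
qed

lemma euler_Hc:
  assumes "q \<in> slit U"
  shows "(\<Sum>m\<in>UNIV. cnj (snd q $ m) * dzetabar m Hc q) = Hc q"
proof (cases q)
  case (Pair z \<zeta>)
  with assms have "z \<in> U"
    by (simp add: slit_def)
  show ?thesis
    unfolding Pair snd_conv
  proof (rule euler_homogeneous)
    show "Hc differentiable at (z, \<zeta>)"
      using smooth_on_imp_differentiable[OF open_slit_U smooth_on_Hc] assms Pair by blast
    show "Hc (z, c *s \<zeta>) = of_real ((cmod c)\<^sup>2) * Hc (z, \<zeta>)" for c
      by (rule homogeneous_Hc[OF \<open>z \<in> U\<close>])
  qed
qed

lemma zeta_up_eq_dzeta:
  assumes "p \<in> slit U"
  shows "zeta_up H j p = dzeta j Hc p"
proof -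
  let ?euler = "\<lambda>q. \<Sum>m\<in>UNIV. cnj (snd q $ m) * dzetabar m Hc q"
  have d: "(\<lambda>q. cnj (snd q $ m) * dzetabar m Hc q) differentiable at p" for m
    using differentiable_snd_nth differentiable_dzetabar_Hc[OF assms]
    by (intro differentiable_mult) (simp_all add: differentiable_cnj_iff)
  have "dzeta j Hc p = dzeta j ?euler p"
  proof (rule dzeta_transform_open[OF open_slit_U assms])
    show "?euler q = Hc q" if "q \<in> slit U" for q
      using euler_Hc[OF that] .
    show "?euler differentiable at p"
      by (intro differentiable_sum ballI d) simp
  qed
  also have "\<dots> = (\<Sum>m\<in>UNIV. dzeta j (\<lambda>q. cnj (snd q $ m) * dzetabar m Hc q) p)"
    using d by (simp add: dzeta_sum)
  also have "\<dots> = (\<Sum>m\<in>UNIV. cnj (snd p $ m) * hup H p $ m $ j)"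
    unfolding dzeta_mult[OF differentiable_cnj[OF differentiable_snd_nth] differentiable_dzetabar_Hc[OF assms]]
    by (simp add: dzeta_cnj_snd_nth hup_eq_dzeta_dzetabar)
  finally show ?thesis
    unfolding zeta_up_def by (simp add: mult.commute)
qed

lemma hup_mult_zeta:
  assumes "p \<in> slit U"
  shows "(\<Sum>i\<in>UNIV. hup H p $ m $ i * snd p $ i) = dzetabar m Hc p"
proof -
  have "(\<Sum>i\<in>UNIV. hup H p $ m $ i * snd p $ i) = cnj (zeta_up H m p)"
    unfolding zeta_up_def by (simp add: hup_hermitian[OF assms, of m])
  also have "\<dots> = dzetabar m Hc p"
    by (simp add: zeta_up_eq_dzeta dzeta_Hc_eq_cnj assms)
  finally show ?thesis .
qed

lemma hdown_mult_dzetabar: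
  assumes "q \<in> slit U"
  shows "(\<Sum>m\<in>UNIV. hdown H q $ j $ m * dzetabar m Hc q) = snd q $ j"
proof -
  have "(\<Sum>m\<in>UNIV. hdown H q $ j $ m * dzetabar m Hc q)
      = (\<Sum>m\<in>UNIV. hdown H q $ j $ m * (\<Sum>i\<in>UNIV. hup H q $ m $ i * snd q $ i))"
    by (simp add: hup_mult_zeta[OF assms])
  also have "\<dots> = (\<Sum>i\<in>UNIV. (\<Sum>m\<in>UNIV. hdown H q $ j $ m * hup H q $ m $ i) * snd q $ i)"
    by (simp add: sum_distrib_left sum_distrib_right mult_ac) (rule sum.swap)
  also have "\<dots> = snd q $ j"
    by (simp add: hdown_mult_hup[OF assms] if_distrib[of "\<lambda>t. t * _"] cong: if_cong)
  finally show ?thesis .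
qed

lemma delta_star_dzetabar_Hc:
  assumes "p \<in> slit U"
  shows "delta_star H k (dzetabar m Hc) p = 0"
proof -
  define E where "E a = (\<Sum>b\<in>UNIV. dz k (\<lambda>q. hup H q $ a $ b) p * snd p $ b)" for a
  have d: "(\<lambda>q. hup H q $ m $ i * snd q $ i) differentiable at p" for i
    by (intro differentiable_mult differentiable_hup[OF assms] differentiable_snd_nth)
  have "dz k (dzetabar m Hc) p = dz k (\<lambda>q. \<Sum>i\<in>UNIV. hup H q $ m $ i * snd q $ i) p"
    using d by (intro dz_transform_open[OF open_slit_U assms]) (simp_all add: hup_mult_zeta)
  also have "\<dots> = (\<Sum>i\<in>UNIV. dz k (\<lambda>q. hup H q $ m $ i * snd q $ i) p)"
    using d by (simp add: dz_sum)
  also have "\<dots> = E m"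
    unfolding E_def dz_mult[OF differentiable_hup[OF assms] differentiable_snd_nth]
    by (simp add: dz_snd_nth)
  finally have dz_part: "dz k (dzetabar m Hc) p = E m" .
  have "(\<Sum>l\<in>UNIV. Nconn H l k p * dzeta l (dzetabar m Hc) p)
      = - (\<Sum>a\<in>UNIV. (\<Sum>l\<in>UNIV. hup H p $ m $ l * hdown H p $ l $ a) * E a)"
    unfolding Nconn_def E_def hup_eq_dzeta_dzetabar[symmetric]
    by (simp add: sum_distrib_left sum_distrib_right mult_ac sum_negf) (rule sum.swap)
  also have "\<dots> = - E m"
    by (simp add: hup_mult_hdown[OF assms] if_distrib[of "\<lambda>t. t * _"] cong: if_cong)
  finally show ?thesis
    unfolding delta_star_def dz_part by simp
qed

lemma Nconn_eq_HC_zeta: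
  assumes "p \<in> slit U"
  shows "Nconn H j k p = (\<Sum>i\<in>UNIV. HC H i j k p * snd p $ i)"
proof -
  have d: "(\<lambda>q. hdown H q $ j $ m * dzetabar m Hc q) differentiable at p" for m
    by (intro differentiable_mult differentiable_hdown[OF assms] differentiable_dzetabar_Hc[OF assms])
  have "Nconn H j k p = delta_star H k (\<lambda>q. snd q $ j) p"
    by (simp add: delta_star_snd_nth)
  also have "\<dots> = delta_star H k (\<lambda>q. \<Sum>m\<in>UNIV. hdown H q $ j $ m * dzetabar m Hc q) p"
    using d by (intro delta_star_transform_open[OF open_slit_U assms]) (simp_all add: hdown_mult_dzetabar)
  also have "\<dots> = (\<Sum>m\<in>UNIV. delta_star H k (\<lambda>q. hdown H q $ j $ m * dzetabar m Hc q) p)"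
    using d by (simp add: delta_star_sum)
  also have "\<dots> = (\<Sum>m\<in>UNIV. delta_star H k (\<lambda>q. hdown H q $ j $ m) p * dzetabar m Hc p)"
    unfolding delta_star_mult[OF differentiable_hdown[OF assms] differentiable_dzetabar_Hc[OF assms]]
    by (simp add: delta_star_dzetabar_Hc[OF assms])
  also have "\<dots> = (\<Sum>i\<in>UNIV. HC H i j k p * snd p $ i)"
    unfolding HC_def hup_mult_zeta[OF assms, symmetric]
    by (simp add: sum_distrib_left sum_distrib_right mult_ac) (rule sum.swap)
  finally show ?thesis .
qed

lemma linear_form_orthogonal_to_zeta_up_vanishes:
  assumes "(z, \<zeta>) \<in> slit U"
    and orth: "\<And>\<xi>. \<xi> \<noteq> 0 \<Longrightarrow> (\<Sum>j\<in>UNIV. (\<Sum>i\<in>UNIV. c i j * \<xi> $ i) * zeta_up H j (z, \<xi>)) = 0"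
  shows "(\<Sum>i\<in>UNIV. c i j * \<zeta> $ i) = 0"
proof -
  define A where "A j q = (\<Sum>i\<in>UNIV. c i j * snd q $ i)" for j and q :: "'n cpt"
  define \<Phi> where "\<Phi> q = (\<Sum>j\<in>UNIV. A j q * dzeta j Hc q)" for q
  have dA: "A j differentiable at q" for j q
    unfolding A_def[abs_def] by (rule differentiable_linear_snd)
  have d\<Phi>: "\<Phi> differentiable at (z, \<zeta>)"
    unfolding \<Phi>_def[abs_def] using dA differentiable_dzeta_Hc[OF assms(1)] by simp
  have "\<Phi> (z, \<xi>) = 0" if "\<xi> \<noteq> 0" for \<xi>
    using orth[OF that] assms(1) that
    by (simp add: \<Phi>_def A_def zeta_up_eq_dzeta slit_def)
  then have "dzetabar l \<Phi> (z, \<zeta>) = 0" for l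
    using dzetabar_eq_0_if_vanishes_on_fibre[OF d\<Phi>] assms(1) by (simp add: slit_def)
  moreover have "dzetabar l \<Phi> (z, \<zeta>) = (\<Sum>j\<in>UNIV. dzetabar l (\<lambda>q. A j q * dzeta j Hc q) (z, \<zeta>))" for l
    unfolding \<Phi>_def[abs_def] using dA differentiable_dzeta_Hc[OF assms(1)]
    by (simp add: dzetabar_sum)
  moreover have "dzetabar l (\<lambda>q. A j q * dzeta j Hc q) (z, \<zeta>) = hup H (z, \<zeta>) $ l $ j * A j (z, \<zeta>)" for l j
    unfolding dzetabar_mult[OF dA differentiable_dzeta_Hc[OF assms(1)]]
    by (simp add: A_def[abs_def] dzetabar_linear_snd dzetabar_dzeta_Hc[OF assms(1)])
  ultimately have "hup H (z, \<zeta>) *v (\<chi> j. A j (z, \<zeta>)) = 0"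
    by (simp add: vec_eq_iff matrix_vector_mult_def)
  from hup_mult_vec_eq_0[OF assms(1) this] show ?thesis
    by (simp add: vec_eq_iff A_def)
qed

lemma Nconn_skew_eq_linear_form:
  assumes berwald: "\<And>i j k z \<zeta>. (z, \<zeta>) \<in> slit U \<Longrightarrow> HC H i j k (z, \<zeta>) = G i j k z"
    and "(z, \<zeta>) \<in> slit U"
  shows "Nconn H j k (z, \<zeta>) - Nconn H k j (z, \<zeta>) = (\<Sum>i\<in>UNIV. (G i j k z - G i k j z) * \<zeta> $ i)"
  using berwald[OF assms(2)]
  by (simp add: Nconn_eq_HC_zeta[OF assms(2)] sum_subtractf algebra_simps)

end

theorem corollary3p1:
  fixes U :: "(complex^'n::finite) set"
    and C :: "(complex^'n) \<times> (complex^'n) \<Rightarrow> real"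
  assumes "complex_cartan U C"
    and "strongly_berwald_cartan U C"
  shows "kahler_cartan U C"
proof -
  interpret cartan_space U C by (rule cartan_space.intro) fact
  obtain G where G: "\<And>i j k z \<zeta>. (z, \<zeta>) \<in> slit U \<Longrightarrow> HC H i j k (z, \<zeta>) = G i j k z"
    using assms(2) unfolding strongly_berwald_cartan_def berwald_cartan_def by metis
  have "Nconn H j k (z, \<zeta>) = Nconn H k j (z, \<zeta>)" if p: "(z, \<zeta>) \<in> slit U" for j k z \<zeta>
  proof -
    have "(\<Sum>i\<in>UNIV. (G i j k z - G i k j z) * \<zeta> $ i) = 0"
    proof (rule linear_form_orthogonal_to_zeta_up_vanishes[OF p])
      fix \<xi> :: "complex^'n" assume "\<xi> \<noteq> 0"
      with p have \<xi>: "(z, \<xi>) \<in> slit U" by (simp add: slit_def)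
      with assms(2) show "(\<Sum>j\<in>UNIV. (\<Sum>i\<in>UNIV. (G i j k z - G i k j z) * \<xi> $ i) * zeta_up H j (z, \<xi>)) = 0"
        unfolding strongly_berwald_cartan_def weakly_kahler_cartan_def
        by (simp add: Nconn_skew_eq_linear_form[OF G \<xi>, symmetric])
    qed
    then show ?thesis
      using Nconn_skew_eq_linear_form[OF G p, of j k] by simp
  qed
  then show ?thesis
    unfolding kahler_cartan_def by auto
qed

end
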